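(* Let $X$ be a quasi-Banach function space over $\mathbf{R}^d$. Then the following are equivalent: (i) $X\in A$; (ii) $T_Q:X\to X$ is bounded uniformly over all cubes $Q$; (iii) $T_Q:X\to X_{\mathrm{weak}}$ is bounded uniformly over all cubes $Q$. Moreover, in this case \[[X]_A=\sup_Q\|T_Q\|_{X\to X}=\sup_Q\|T_Q\|_{X\to X_{\mathrm{weak}}}.\]
   Context: Cubes are axis-parallel cubes in $\mathbf{R}^d$. A quasi-Banach function space over $\mathbf{R}^d$ is a complete quasi-normed space $X\subseteq L^0(\mathbf{R}^d)$ with the ideal property (if $f\in X$, $|g|\le|f|$ then $g\in X$, $\|g\|_X\le\|f\|_X$) and the saturation property (every set of positive measure contains a subset $F$ of positive measure with $\mathbf{1}_F\in X$). Köthe dual: $\|g\|_{X'}=\sup_{\|f\|_X=1}\int|fg|$. $X_{\mathrm{weak}}$: $f$ with $\mathbf{1}_{\{|f|>\lambda\}}\in X$ for all $\lambda>0$ and $\|f\|_{X_{\mathrm{weak}}}=\sup_\lambda\lambda\|\mathbf{1}_{\{|f|>\lambda\}}\|_X<\infty$. $T_Qf=\big(\frac1{|Q|}\int_Q|f|\big)\mathbf{1}_Q$. $X\in A$: $\mathbf{1}_Q\in X$ and $\mathbf{1}_Q\in X'$ for all cubes and $[X]_A=\sup_Q|Q|^{-1}\|\mathbf{1}_Q\|_X\|\mathbf{1}_Q\|_{X'}<\infty$. *)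

theory Defs
  imports "HOL-Analysis.Analysis"
begin

text \<open>R^d is modelled by an arbitrary Euclidean space 'a. A quasi-Banach function space X is given by its
  quasi-norm N, extended to all measurable functions with value \<infinity> outside X,
  so that X = {f measurable. N f < \<infinity>}.\<close>

definition cubes :: "'a::euclidean_space set set" where
  "cubes = {cbox a (a + l *\<^sub>R One) | a l. l > 0}"

definition qbfs_space :: "(('a::euclidean_space \<Rightarrow> real) \<Rightarrow> ennreal) \<Rightarrow> ('a \<Rightarrow> real) set" where
  "qbfs_space N = {f \<in> borel_measurable lebesgue. N f < \<infinity>}"

definition qBFS :: "(('a::euclidean_space \<Rightarrow> real) \<Rightarrow> ennreal) \<Rightarrow> bool" where
  "qBFS N \<longleftrightarrow>
     \<comment> \<open>definiteness\<close>
     (\<forall>f\<in>borel_measurable lebesgue. N f = 0 \<longleftrightarrow> (AE x in lebesgue. f x = 0)) \<and>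
     \<comment> \<open>homogeneity\<close>
     (\<forall>f\<in>borel_measurable lebesgue. \<forall>c::real. N (\<lambda>x. c * f x) = ennreal \<bar>c\<bar> * N f) \<and>
     \<comment> \<open>quasi-triangle inequality\<close>
     (\<exists>K::real\<ge>1. \<forall>f\<in>borel_measurable lebesgue. \<forall>g\<in>borel_measurable lebesgue.
         N (\<lambda>x. f x + g x) \<le> ennreal K * (N f + N g)) \<and>
     \<comment> \<open>ideal property\<close>
     (\<forall>f\<in>borel_measurable lebesgue. \<forall>g\<in>borel_measurable lebesgue.
         (AE x in lebesgue. \<bar>g x\<bar> \<le> \<bar>f x\<bar>) \<longrightarrow> N g \<le> N f) \<and>
     \<comment> \<open>saturation property\<close>
     (\<forall>E\<in>sets lebesgue. emeasure lebesgue E > 0 \<longrightarrow>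
         (\<exists>F\<in>sets lebesgue. F \<subseteq> E \<and> emeasure lebesgue F > 0 \<and>
            N (indicator F :: 'a \<Rightarrow> real) < \<infinity>)) \<and>
     \<comment> \<open>completeness\<close>
     (\<forall>u::nat \<Rightarrow> 'a \<Rightarrow> real. (\<forall>n. u n \<in> qbfs_space N) \<and>
         (\<forall>e::real>0. \<exists>M. \<forall>m\<ge>M. \<forall>n\<ge>M. N (\<lambda>x. u m x - u n x) < ennreal e) \<longrightarrow>
         (\<exists>f\<in>qbfs_space N. (\<lambda>n. N (\<lambda>x. u n x - f x)) \<longlonglongrightarrow> 0))"

text \<open>Koethe dual norm (ennreal-valued; g \<in> X' iff finite).\<close>
definition kothe_norm :: "(('a::euclidean_space \<Rightarrow> real) \<Rightarrow> ennreal) \<Rightarrow> ('a \<Rightarrow> real) \<Rightarrow> ennreal" where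
  "kothe_norm N g = (SUP f\<in>{f\<in>qbfs_space N. N f = 1}. \<integral>\<^sup>+ x. ennreal \<bar>f x * g x\<bar> \<partial>lebesgue)"

text \<open>Weak quasi-norm (value \<infinity> iff f \<notin> X_weak).\<close>
definition weak_norm :: "(('a::euclidean_space \<Rightarrow> real) \<Rightarrow> ennreal) \<Rightarrow> ('a \<Rightarrow> real) \<Rightarrow> ennreal" where
  "weak_norm N f = (SUP t\<in>{0<..}. ennreal t * N (indicator {x. t < \<bar>f x\<bar>} :: 'a \<Rightarrow> real))"

definition A_const :: "(('a::euclidean_space \<Rightarrow> real) \<Rightarrow> ennreal) \<Rightarrow> ennreal" where
  "A_const N = (SUP Q\<in>cubes. N (indicator Q :: 'a \<Rightarrow> real) * kothe_norm N (indicator Q)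
                              / emeasure lebesgue Q)"

definition in_A :: "(('a::euclidean_space \<Rightarrow> real) \<Rightarrow> ennreal) \<Rightarrow> bool" where
  "in_A N \<longleftrightarrow> (\<forall>Q\<in>cubes. N (indicator Q :: 'a \<Rightarrow> real) < \<infinity> \<and> kothe_norm N (indicator Q) < \<infinity>)
                \<and> A_const N < \<infinity>"

definition avg :: "'a::euclidean_space set \<Rightarrow> ('a \<Rightarrow> real) \<Rightarrow> ennreal" where
  "avg Q f = (\<integral>\<^sup>+ x\<in>Q. ennreal \<bar>f x\<bar> \<partial>lebesgue) / emeasure lebesgue Q"

definition T_op :: "'a::euclidean_space set \<Rightarrow> ('a \<Rightarrow> real) \<Rightarrow> ('a \<Rightarrow> real)" where
  "T_op Q f = (\<lambda>x. enn2real (avg Q f) * indicator Q x)"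

text \<open>Operator (quasi-)norm of T_Q from X (quasi-norm N) into the space with quasi-norm M;
  \<infinity> if T_Q f is undefined (infinite average) for some f in X.\<close>
definition T_opnorm :: "(('a::euclidean_space \<Rightarrow> real) \<Rightarrow> ennreal) \<Rightarrow> (('a \<Rightarrow> real) \<Rightarrow> ennreal)
                          \<Rightarrow> 'a set \<Rightarrow> ennreal" where
  "T_opnorm N M Q = (SUP f\<in>{f\<in>qbfs_space N. N f \<le> 1}.
                       (if avg Q f = \<infinity> then \<infinity> else M (T_op Q f)))"

end

theory Submission
  imports Defs
begin

text \<open>The averaging operator \<open>T\<^sub>Q f = \<langle>|f|\<rangle>\<^sub>Q \<one>\<^sub>Q\<close> has rank one, and the weak quasi-norm
  agrees with the quasi-norm on the multiples \<open>c \<one>\<^sub>Q\<close> of its range. So into either target its norm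
  is \<open>\<parallel>\<one>\<^sub>Q\<parallel>\<^sub>X\<close> times the supremum of \<open>\<langle>|f|\<rangle>\<^sub>Q\<close> over the unit ball of \<open>X\<close>, and that supremum
  is \<open>\<parallel>\<one>\<^sub>Q\<parallel>\<^sub>X\<^sub>'/|Q|\<close>, since by homogeneity the Koethe dual norm may be taken over the unit
  ball instead of the unit sphere. Hence both operator norms equal
  the quotient \<open>\<parallel>\<one>\<^sub>Q\<parallel>\<^sub>X \<parallel>\<one>\<^sub>Q\<parallel>\<^sub>X\<^sub>' / |Q|\<close> cube by cube. Definiteness and saturation make both
  factors of the quotient nonzero, so it is finite exactly when both factors are.\<close>

lemma cube_lebesgue_measure:
  assumes "Q \<in> (cubes :: 'a::euclidean_space set set)"
  shows "Q \<in> sets lebesgue" "0 < emeasure lebesgue Q" "emeasure lebesgue Q < \<infinity>"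
proof -
  obtain a l where Q: "Q = cbox a (a + l *\<^sub>R One)" "l > 0"
    using assms unfolding cubes_def by blast
  show "Q \<in> sets lebesgue" using Q by simp
  have "emeasure lebesgue Q = ennreal (l ^ DIM('a))"
    using Q by (simp add: emeasure_lborel_cbox_eq inner_simps ennreal_power)
  then show "0 < emeasure lebesgue Q" "emeasure lebesgue Q < \<infinity>"
    using Q by auto
qed

lemma qBFS_eq_0_iff_AE:
  "qBFS N \<Longrightarrow> f \<in> borel_measurable lebesgue \<Longrightarrow> N f = 0 \<longleftrightarrow> (AE x in lebesgue. f x = 0)"
  unfolding qBFS_def by blast

lemma qBFS_homogeneous:
  "qBFS N \<Longrightarrow> f \<in> borel_measurable lebesgue \<Longrightarrow> N (\<lambda>x. c * f x) = ennreal \<bar>c\<bar> * N f"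
  unfolding qBFS_def by blast

lemma qBFS_saturation:
  assumes "qBFS N" "E \<in> sets lebesgue" "emeasure lebesgue E > 0"
  shows "\<exists>F\<in>sets lebesgue. F \<subseteq> E \<and> emeasure lebesgue F > 0 \<and> N (indicator F :: _ \<Rightarrow> real) < \<infinity>"
  using assms unfolding qBFS_def by blast

lemma qBFS_indicator_nonzero:
  assumes N: "qBFS N" and S: "S \<in> sets lebesgue" "emeasure lebesgue S > 0"
  shows "N (indicator S :: _ \<Rightarrow> real) \<noteq> 0"
proof
  assume "N (indicator S :: _ \<Rightarrow> real) = 0"
  then have "AE x in lebesgue. x \<notin> S"
    using qBFS_eq_0_iff_AE[OF N, of "indicator S"] S(1) by (simp add: indicator_eq_0_iff)
  then have "emeasure lebesgue S = 0"
    using AE_iff_measurable[OF S(1)] by simp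
  with S(2) show False by simp
qed

lemma nn_integral_le_kothe_norm:
  assumes N: "qBFS N" and f: "f \<in> qbfs_space N" and g: "g \<in> borel_measurable lebesgue"
  shows "(\<integral>\<^sup>+ x. ennreal \<bar>f x * g x\<bar> \<partial>lebesgue) \<le> N f * kothe_norm N g"
proof (cases "N f = 0")
  case True
  then have "AE x in lebesgue. f x = 0"
    using qBFS_eq_0_iff_AE[OF N] f by (simp add: qbfs_space_def)
  then have "(\<integral>\<^sup>+ x. ennreal \<bar>f x * g x\<bar> \<partial>lebesgue) = 0"
    by (subst nn_integral_cong_AE[where v="\<lambda>x. 0"]) (auto elim: AE_mp)
  then show ?thesis by simp
next
  case False
  have fm: "f \<in> borel_measurable lebesgue" and "N f < \<infinity>"
    using f by (auto simp: qbfs_space_def)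
  then obtain r where r: "N f = ennreal r" "r > 0"
    using False by (cases "N f") (auto simp: top_unique)
  define h where "h = (\<lambda>x. (1/r) * f x)"
  have hm: "h \<in> borel_measurable lebesgue" unfolding h_def using fm by measurable
  have "N h = 1"
    unfolding h_def using qBFS_homogeneous[OF N fm, of "1/r"] r
    by (simp add: ennreal_mult[symmetric])
  with hm have h: "h \<in> {h \<in> qbfs_space N. N h = 1}" by (simp add: qbfs_space_def)
  have "(\<integral>\<^sup>+ x. ennreal \<bar>f x * g x\<bar> \<partial>lebesgue) = (\<integral>\<^sup>+ x. ennreal r * ennreal \<bar>h x * g x\<bar> \<partial>lebesgue)"
    using r by (intro nn_integral_cong) (simp add: h_def abs_mult ennreal_mult[symmetric])
  also have "\<dots> = ennreal r * (\<integral>\<^sup>+ x. ennreal \<bar>h x * g x\<bar> \<partial>lebesgue)"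
    using hm g by (intro nn_integral_cmult) measurable
  also have "\<dots> \<le> N f * kothe_norm N g"
    unfolding r(1) kothe_norm_def using h by (intro mult_left_mono SUP_upper) auto
  finally show ?thesis .
qed

lemma kothe_norm_unit_ball:
  assumes N: "qBFS N" and g: "g \<in> borel_measurable lebesgue"
  shows "(SUP f\<in>{f\<in>qbfs_space N. N f \<le> 1}. \<integral>\<^sup>+ x. ennreal \<bar>f x * g x\<bar> \<partial>lebesgue) = kothe_norm N g"
proof (rule antisym)
  show "(SUP f\<in>{f\<in>qbfs_space N. N f \<le> 1}. \<integral>\<^sup>+ x. ennreal \<bar>f x * g x\<bar> \<partial>lebesgue) \<le> kothe_norm N g"
  proof (rule SUP_least)
    fix f assume f: "f \<in> {f\<in>qbfs_space N. N f \<le> 1}"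
    then have "(\<integral>\<^sup>+ x. ennreal \<bar>f x * g x\<bar> \<partial>lebesgue) \<le> N f * kothe_norm N g"
      using nn_integral_le_kothe_norm[OF N _ g] by blast
    also have "\<dots> \<le> kothe_norm N g"
      using f mult_right_mono[of "N f" 1 "kothe_norm N g"] by simp
    finally show "(\<integral>\<^sup>+ x. ennreal \<bar>f x * g x\<bar> \<partial>lebesgue) \<le> kothe_norm N g" .
  qed
qed (unfold kothe_norm_def, rule SUP_subset_mono, auto)

lemma kothe_norm_indicator_nonzero:
  assumes N: "qBFS N" and Q: "Q \<in> sets lebesgue" "emeasure lebesgue Q > 0"
  shows "kothe_norm N (indicator Q :: _ \<Rightarrow> real) \<noteq> 0"
proof
  assume kothe_0: "kothe_norm N (indicator Q :: _ \<Rightarrow> real) = 0"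
  obtain F where F: "F \<in> sets lebesgue" "F \<subseteq> Q" "emeasure lebesgue F > 0"
    and NF: "N (indicator F :: _ \<Rightarrow> real) < \<infinity>"
    using qBFS_saturation[OF N Q] by blast
  have "emeasure lebesgue F = (\<integral>\<^sup>+ x. indicator F x \<partial>lebesgue)"
    using F(1) by simp
  also have "\<dots> = (\<integral>\<^sup>+ x. ennreal \<bar>indicator F x * indicator Q x\<bar> \<partial>lebesgue)"
    using F(2) by (intro nn_integral_cong) (auto split: split_indicator)
  also have "\<dots> \<le> N (indicator F) * kothe_norm N (indicator Q)"
    using F(1) NF Q(1) by (intro nn_integral_le_kothe_norm[OF N]) (auto simp: qbfs_space_def)
  finally show False using kothe_0 F(3) by simp
qed

lemma SUP_ennreal_greaterThanLessThan:
  "(0::real) < c \<Longrightarrow> (SUP t\<in>{0<..<c}. ennreal t) = ennreal c"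
  using continuous_at_Sup_mono[of ennreal "{0<..<c}"]
  by (simp add: mono_def ennreal_leI continuous_at_imp_continuous_within)

lemma weak_norm_scaled_indicator:
  assumes N0: "N (\<lambda>_. 0) = 0" and c: "c \<ge> 0"
  shows "weak_norm N (\<lambda>x. c * indicator Q x) = ennreal c * N (indicator Q)"
proof -
  have "N (indicator {} :: _ \<Rightarrow> real) = 0"
    using N0 by (simp add: indicator_def[abs_def])
  then have "N (indicator {x. t < \<bar>c * indicator Q x\<bar>}) = (if t < c then N (indicator Q) else 0)"
    if "t > 0" for t :: real
    using that c by (cases "t < c") (auto simp: indicator_def cong: rev_conj_cong)
  then have weak: "weak_norm N (\<lambda>x. c * indicator Q x) =
      (SUP t\<in>{0<..}. if t < c then ennreal t * N (indicator Q) else 0)"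
    unfolding weak_norm_def by (intro SUP_cong) auto
  show ?thesis
  proof (cases "c = 0")
    case True
    then show ?thesis unfolding weak by simp
  next
    case False
    with c have "0 < c" by simp
    show ?thesis unfolding weak
    proof (rule antisym)
      show "(SUP t\<in>{0<..}. if t < c then ennreal t * N (indicator Q) else 0) \<le> ennreal c * N (indicator Q)"
        by (rule SUP_least) (auto intro!: mult_right_mono ennreal_leI)
      have "ennreal c * N (indicator Q) = (SUP t\<in>{0<..<c}. ennreal t * N (indicator Q))"
        using SUP_ennreal_greaterThanLessThan[OF \<open>0 < c\<close>] by (metis SUP_mult_right_ennreal)
      also have "\<dots> \<le> (SUP t\<in>{0<..}. if t < c then ennreal t * N (indicator Q) else 0)"
        by (rule SUP_mono) (auto intro!: bexI)
      finally show "ennreal c * N (indicator Q) \<le> \<dots>" .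
    qed
  qed
qed

lemma avg_eq_nn_integral_indicator:
  "avg Q f = (\<integral>\<^sup>+ x. ennreal \<bar>f x * indicator Q x\<bar> \<partial>lebesgue) / emeasure lebesgue Q"
  unfolding avg_def by (intro arg_cong2[where f="(/)"] nn_integral_cong refl) (auto simp: indicator_def)

text \<open>The hypothesis \<open>m \<noteq> 0\<close> makes the convention \<open>T_opnorm = \<infinity>\<close> for infinite averages
  agree with \<open>\<infinity> * m = \<infinity>\<close>.\<close>

lemma T_opnorm_eq:
  assumes N: "qBFS N" and Q: "Q \<in> sets lebesgue"
    and M: "\<And>c. c \<ge> 0 \<Longrightarrow> M (\<lambda>x. c * indicator Q x) = ennreal c * m" and "m \<noteq> 0"
  shows "T_opnorm N M Q = kothe_norm N (indicator Q) / emeasure lebesgue Q * m"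
proof -
  have opnorm_term: "(if avg Q f = \<infinity> then \<infinity> else M (T_op Q f)) = avg Q f * m" for f
  proof (cases "avg Q f = \<infinity>")
    case False
    then show ?thesis
      unfolding T_op_def by (simp add: M ennreal_enn2real_if)
  qed (simp add: \<open>m \<noteq> 0\<close>)
  have "T_opnorm N M Q = (SUP f\<in>{f\<in>qbfs_space N. N f \<le> 1}. avg Q f) * m"
    unfolding T_opnorm_def opnorm_term by (simp add: SUP_mult_right_ennreal)
  also have "(SUP f\<in>{f\<in>qbfs_space N. N f \<le> 1}. avg Q f) = kothe_norm N (indicator Q) / emeasure lebesgue Q"
    using kothe_norm_unit_ball[OF N, of "indicator Q"] Q
    by (simp add: avg_eq_nn_integral_indicator SUP_divide_ennreal[symmetric])
  finally show ?thesis .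
qed

lemma
  assumes N: "qBFS N" and Q: "Q \<in> cubes"
  shows T_opnorm_cube: "T_opnorm N N Q = N (indicator Q) * kothe_norm N (indicator Q) / emeasure lebesgue Q"
    and T_opnorm_weak_cube:
      "T_opnorm N (weak_norm N) Q = N (indicator Q) * kothe_norm N (indicator Q) / emeasure lebesgue Q"
proof -
  note Q_measure = cube_lebesgue_measure[OF Q]
  have N_Q: "N (indicator Q :: _ \<Rightarrow> real) \<noteq> 0"
    using qBFS_indicator_nonzero[OF N Q_measure(1,2)] .
  have N0: "N (\<lambda>_. 0) = 0"
    using qBFS_eq_0_iff_AE[OF N, of "\<lambda>_. 0"] by simp
  have reorder: "kothe_norm N (indicator Q) / emeasure lebesgue Q * N (indicator Q) =
      N (indicator Q) * kothe_norm N (indicator Q) / emeasure lebesgue Q"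
    by (simp add: divide_ennreal_def mult_ac)
  have N_scaled: "N (\<lambda>x. c * indicator Q x) = ennreal c * N (indicator Q)" if "c \<ge> 0" for c
    using qBFS_homogeneous[OF N, of "indicator Q" c] Q_measure(1) that by simp
  show "T_opnorm N N Q = N (indicator Q) * kothe_norm N (indicator Q) / emeasure lebesgue Q"
    unfolding reorder[symmetric] by (rule T_opnorm_eq[OF N Q_measure(1) N_scaled N_Q])
  show "T_opnorm N (weak_norm N) Q = N (indicator Q) * kothe_norm N (indicator Q) / emeasure lebesgue Q"
    unfolding reorder[symmetric]
    by (rule T_opnorm_eq[OF N Q_measure(1) weak_norm_scaled_indicator[of N, OF N0] N_Q])
qed

lemma in_A_iff_A_const_finite:
  assumes N: "qBFS N"
  shows "in_A N \<longleftrightarrow> A_const N < \<infinity>"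
proof
  assume A: "A_const N < \<infinity>"
  have "N (indicator Q :: 'a \<Rightarrow> real) < \<infinity> \<and> kothe_norm N (indicator Q) < \<infinity>"
    if Q: "(Q :: 'a set) \<in> cubes" for Q
  proof -
    note Q_measure = cube_lebesgue_measure[OF Q]
    have "N (indicator Q) * kothe_norm N (indicator Q) * inverse (emeasure lebesgue Q) < \<infinity>"
      using A SUP_upper[OF Q, of "\<lambda>Q. N (indicator Q) * kothe_norm N (indicator Q) / emeasure lebesgue Q"]
      unfolding A_const_def divide_ennreal_def by order
    then show ?thesis
      using qBFS_indicator_nonzero[OF N Q_measure(1,2)] kothe_norm_indicator_nonzero[OF N Q_measure(1,2)]
        Q_measure(3) by (auto simp: ennreal_mult_less_top)
  qed
  with A show "in_A N" unfolding in_A_def by blast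
qed (simp add: in_A_def)

theorem proposition3p3:
  fixes N :: "('a::euclidean_space \<Rightarrow> real) \<Rightarrow> ennreal"
  assumes "qBFS N"
  shows "(in_A N \<longleftrightarrow> (SUP Q\<in>cubes. T_opnorm N N Q) < \<infinity>)
       \<and> (in_A N \<longleftrightarrow> (SUP Q\<in>cubes. T_opnorm N (weak_norm N) Q) < \<infinity>)
       \<and> (in_A N \<longrightarrow> A_const N = (SUP Q\<in>cubes. T_opnorm N N Q)
                  \<and> A_const N = (SUP Q\<in>cubes. T_opnorm N (weak_norm N) Q))"
proof -
  have "(SUP Q\<in>cubes. T_opnorm N N Q) = A_const N"
    unfolding A_const_def using T_opnorm_cube[OF assms] by (intro SUP_cong) auto
  moreover have "(SUP Q\<in>cubes. T_opnorm N (weak_norm N) Q) = A_const N"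
    unfolding A_const_def using T_opnorm_weak_cube[OF assms] by (intro SUP_cong) auto
  ultimately show ?thesis
    using in_A_iff_A_const_finite[OF assms] by simp
qed

end
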